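(* Let $0<\omega\le\pi/2$, let $Q$ be a convex polygon, let $\mathcal{W}$ be a nonempty family of $\omega$-wedges each of which contains $Q$, and let $F_Q=\bigcap_{W\in\mathcal{W}} W$. Let $e$ be an edge of $Q$, let $H_e$ be the closed half-plane whose boundary line $\ell_e$ contains $e$ and which does not contain the interior of $Q$, and let $F_{Q,e}=F_Q\cap H_e$. If $F_{Q,e}\not\subseteq \ell_e$, then $F_{Q,e}$ contains a (nondegenerate) triangle one of whose sides is $e$.
   Context: An $\omega$-wedge with apex $q$ is the closed region bounded by two rays emanating from $q$ that form the angle $\omega$, together with all points between them. *)

theory Defs
  imports "HOL-Analysis.Analysis"
begin

definition vangle :: "real^2 \<Rightarrow> real^2 \<Rightarrow> real" where
  "vangle u v = arccos ((u \<bullet> v) / (norm u * norm v))"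

text \<open>An omega-wedge with apex q: the closed region bounded by the rays
  from q in directions u and v (angle omega between them), together with all
  points between them. For 0 < omega < pi this is the set of
  q + s u + t v with s, t >= 0.\<close>
definition wedge :: "real \<Rightarrow> real^2 \<Rightarrow> real^2 \<Rightarrow> real^2 \<Rightarrow> (real^2) set" where
  "wedge \<omega> q u v = {q + s *\<^sub>R u + t *\<^sub>R v | s t. 0 \<le> s \<and> 0 \<le> t}"

definition is_wedge :: "real \<Rightarrow> (real^2) set \<Rightarrow> bool" where
  "is_wedge \<omega> W \<longleftrightarrow> (\<exists>q u v. u \<noteq> 0 \<and> v \<noteq> 0 \<and> vangle u v = \<omega> \<and> W = wedge \<omega> q u v)"

definition convex_polygon :: "(real^2) set \<Rightarrow> bool" where
  "convex_polygon Q \<longleftrightarrow> (\<exists>P. finite P \<and> Q = convex hull P) \<and> interior Q \<noteq> {}"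

end

theory Submission
  imports Defs
begin

text \<open>The region is an intersection of convex sets (wedges and a half-plane), so it is convex;
  it contains the edge and, by hypothesis, a point off the line of the edge. The convex hull
  of the edge and that point is the required nondegenerate triangle.\<close>

lemma convex_wedge: "convex (wedge \<omega> q u v)"
  unfolding convex_def wedge_def
proof clarify
  fix s1 t1 s2 t2 c d :: real
  assume nonneg: "0 \<le> s1" "0 \<le> t1" "0 \<le> s2" "0 \<le> t2" "0 \<le> c" "0 \<le> d" and "c + d = 1"
  then have "c *\<^sub>R (q + s1 *\<^sub>R u + t1 *\<^sub>R v) + d *\<^sub>R (q + s2 *\<^sub>R u + t2 *\<^sub>R v)
      = q + (c * s1 + d * s2) *\<^sub>R u + (c * t1 + d * t2) *\<^sub>R v"
    by (simp add: algebra_simps flip: scaleR_add_left)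
  moreover have "0 \<le> c * s1 + d * s2" "0 \<le> c * t1 + d * t2"
    using nonneg by simp_all
  ultimately show "\<exists>s t. c *\<^sub>R (q + s1 *\<^sub>R u + t1 *\<^sub>R v) + d *\<^sub>R (q + s2 *\<^sub>R u + t2 *\<^sub>R v)
      = q + s *\<^sub>R u + t *\<^sub>R v \<and> 0 \<le> s \<and> 0 \<le> t"
    by blast
qed

lemma is_wedge_imp_convex: "is_wedge \<omega> W \<Longrightarrow> convex W"
  unfolding is_wedge_def by (auto intro: convex_wedge)

lemma convex_Inter_wedges_Int_halfspace_ge:
  assumes "\<forall>W\<in>\<W>. is_wedge \<omega> W"
  shows "convex (\<Inter>\<W> \<inter> {z. a \<bullet> z \<ge> b})"
  using assms by (intro convex_Int convex_Inter convex_halfspace_ge) (auto intro: is_wedge_imp_convex)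

lemma affine_hull_pair_subset_hyperplane:
  assumes "a \<bullet> x = b" and "a \<bullet> y = b"
  shows "affine hull {x, y} \<subseteq> {z. a \<bullet> z = b}"
  using assms by (intro hull_minimal) (auto simp: affine_hyperplane)

theorem lemma3p5:
  fixes \<omega> :: real and Q :: "(real^2) set" and \<W> :: "(real^2) set set"
    and x y :: "real^2" and a :: "real^2" and b :: real
  assumes "0 < \<omega>" and "\<omega> \<le> pi / 2"
    and "convex_polygon Q"
    and "\<W> \<noteq> {}" and "\<forall>W\<in>\<W>. is_wedge \<omega> W \<and> Q \<subseteq> W"
    and "x \<noteq> y" and "closed_segment x y face_of Q"
    and "a \<noteq> 0" and "closed_segment x y \<subseteq> {z. a \<bullet> z = b}"
    and "Q \<subseteq> {z. a \<bullet> z \<le> b}"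
    and "\<not> (\<Inter>\<W> \<inter> {z. a \<bullet> z \<ge> b} \<subseteq> {z. a \<bullet> z = b})"
  shows "\<exists>p. p \<notin> affine hull {x, y} \<and>
             convex hull {x, y, p} \<subseteq> \<Inter>\<W> \<inter> {z. a \<bullet> z \<ge> b}"
proof -
  let ?F = "\<Inter>\<W> \<inter> {z. a \<bullet> z \<ge> b}"
  have on_line: "a \<bullet> x = b" "a \<bullet> y = b"
    using assms(9) by auto
  have "x \<in> Q" "y \<in> Q"
    using face_of_imp_subset[OF assms(7)] by auto
  with assms(5) on_line have "x \<in> ?F" "y \<in> ?F"
    by auto
  moreover obtain p where "p \<in> ?F" and off_line: "a \<bullet> p \<noteq> b"
    using assms(11) by blast
  moreover have "convex ?F"
    using assms(5) by (intro convex_Inter_wedges_Int_halfspace_ge) auto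
  ultimately have "convex hull {x, y, p} \<subseteq> ?F"
    by (intro hull_minimal) auto
  moreover have "p \<notin> affine hull {x, y}"
    using affine_hull_pair_subset_hyperplane[OF on_line] off_line by blast
  ultimately show ?thesis
    by blast
qed

end
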